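(* There is an absolute constant $c$ such that the following holds. Let $P$ be a finite set of points in $\mathbb{R}^2$, each $p\in P$ having a transmission radius $r(p)>0$. Let $C$ be a clique in the intersection graph $\mathcal{G}^{\times}(\mathcal{D}_P)$ and let $P(C)\subseteq P$ be the set of points whose transmission disks belong to $C$. Then $P(C)$ can be covered by at most $c$ transitive paths in $\mathcal{G}_{\mathrm{tr}}(P)$, i.e. $P(C)$ is the union of at most $c$ sets each of whose points can be ordered as a transitive path.
   Context: The transmission graph $\mathcal{G}_{\mathrm{tr}}(P)$ is the directed graph on $P$ with an arc $(p,q)$ iff $|pq|\leq r(p)$ (Euclidean distance). The transmission disk of $p$ is $D_p$, the closed disk of radius $r(p)$ centered at $p$, and $\mathcal{D}_P=\{D_p:p\in P\}$. $\mathcal{G}^{\times}(\mathcal{D}_P)$ is the undirected graph with node set $\mathcal{D}_P$ and an edge between $D_p,D_q$ iff $D_p\cap D_q\neq\emptyset$. A transitive path is a sequence $q_1,\ldots,q_k$ of distinct points of $P$ such that $(q_i,q_j)$ is an arc of $\mathcal{G}_{\mathrm{tr}}(P)$ for all $1\le i<j\le k$. *)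

theory Defs
  imports "HOL-Analysis.Analysis"
begin

definition tr_arc :: "(real^2) set \<Rightarrow> (real^2 \<Rightarrow> real) \<Rightarrow> real^2 \<Rightarrow> real^2 \<Rightarrow> bool" where
  "tr_arc P r p q \<longleftrightarrow> p \<in> P \<and> q \<in> P \<and> dist p q \<le> r p"

definition tr_disk :: "(real^2 \<Rightarrow> real) \<Rightarrow> real^2 \<Rightarrow> (real^2) set" where
  "tr_disk r p = cball p (r p)"

definition transitive_path :: "(real^2) set \<Rightarrow> (real^2 \<Rightarrow> real) \<Rightarrow> (real^2) list \<Rightarrow> bool" where
  "transitive_path P r qs \<longleftrightarrow> distinct qs \<and> set qs \<subseteq> P \<and>
     (\<forall>i j. i < j \<and> j < length qs \<longrightarrow> tr_arc P r (qs ! i) (qs ! j))"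

text \<open>The set of points P(C) whose disks form a clique C in the intersection graph of the disks.\<close>
definition disk_clique :: "(real^2) set \<Rightarrow> (real^2 \<Rightarrow> real) \<Rightarrow> (real^2) set \<Rightarrow> bool" where
  "disk_clique P r Q \<longleftrightarrow> Q \<subseteq> P \<and>
     (\<forall>p\<in>Q. \<forall>q\<in>Q. tr_disk r p \<inter> tr_disk r q \<noteq> {})"

end

theory Submission
  imports Defs
begin

(* Let x0 be a point of the clique with smallest radius \<rho>. Every disk of the clique meets
   the disk of x0, so each p lies within r p + \<rho> of x0. Call p, q compatible if
   |pq| \<le> max (r p) (r q); a set of pairwise compatible points, listed by decreasing radius,
   is a transitive path. Points within 4\<rho> of x0 are sorted into a grid of side \<rho>/2,
   whose cells have diameter < \<rho>. The remaining points are sorted by the grid cell of side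
   1/4 containing their unit direction from x0; for two such points at distances a, b from x0
   and with unit directions u, u',
   |pq|\<^sup>2 = (a - b)\<^sup>2 + a b |u - u'|\<^sup>2 \<le> (a - b)\<^sup>2 + a b / 4, and
   4\<rho> \<le> a, b \<le> max (r p) (r q) + \<rho> bounds this by max (r p) (r q)\<^sup>2.
   This gives 17\<^sup>2 + 9\<^sup>2 = 370 classes of pairwise compatible points. *)

lemma transitive_path_if_pairwise_close:
  assumes "finite S" "S \<subseteq> P"
    and close: "\<And>p q. p \<in> S \<Longrightarrow> q \<in> S \<Longrightarrow> dist p q \<le> max (r p) (r q)"
  shows "\<exists>qs. transitive_path P r qs \<and> set qs = S"
proof -
  obtain ys where "distinct ys" "set ys = S"
    using finite_distinct_list[OF \<open>finite S\<close>] by blast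
  define qs where "qs = sort_key (\<lambda>x. - r x) ys"
  have qs: "distinct qs" "set qs = S"
    using \<open>distinct ys\<close> \<open>set ys = S\<close> by (simp_all add: qs_def)
  have "tr_arc P r (qs ! i) (qs ! j)" if "i < j" "j < length qs" for i j
  proof -
    have "- r (qs ! i) \<le> - r (qs ! j)"
      using sorted_nth_mono[of "map (\<lambda>x. - r x) qs" i j] that by (simp add: qs_def)
    moreover have "qs ! i \<in> S" "qs ! j \<in> S"
      using qs that by auto
    ultimately show ?thesis
      using close[of "qs ! i" "qs ! j"] \<open>S \<subseteq> P\<close> by (auto simp: tr_arc_def)
  qed
  then show ?thesis
    using qs \<open>S \<subseteq> P\<close> by (auto simp: transitive_path_def)
qed

lemma transitive_path_cover_by_labels:
  assumes "finite Q" "Q \<subseteq> P" "finite L" "lab ` Q \<subseteq> L"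
    and close: "\<And>p q. p \<in> Q \<Longrightarrow> q \<in> Q \<Longrightarrow> lab p = lab q \<Longrightarrow> dist p q \<le> max (r p) (r q)"
  shows "\<exists>paths. finite paths \<and> card paths \<le> card L \<and>
           (\<forall>qs\<in>paths. transitive_path P r qs) \<and> (\<Union>qs\<in>paths. set qs) = Q"
proof -
  have "\<exists>qs. transitive_path P r qs \<and> set qs = {p\<in>Q. lab p = l}" for l
    by (rule transitive_path_if_pairwise_close) (use assms in auto)
  then obtain path where path: "\<And>l. transitive_path P r (path l) \<and> set (path l) = {p\<in>Q. lab p = l}"
    by metis
  have "card (path ` lab ` Q) \<le> card L"
    using card_image_le[of "lab ` Q" path] card_mono[OF \<open>finite L\<close> \<open>lab ` Q \<subseteq> L\<close>]
      \<open>finite Q\<close> by simp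
  with path show ?thesis
    by (intro exI[of _ "path ` lab ` Q"]) (auto simp: \<open>finite Q\<close>)
qed

definition grid_cell :: "real \<Rightarrow> real^2 \<Rightarrow> int \<times> int" where
  "grid_cell s v = (\<lfloor>v $ 1 / s\<rfloor>, \<lfloor>v $ 2 / s\<rfloor>)"

lemma grid_cell_in_square:
  assumes "0 < s" "norm v \<le> of_int n * s"
  shows "grid_cell s v \<in> {-n..n} \<times> {-n..n}"
proof -
  have "\<lfloor>v $ i / s\<rfloor> \<in> {-n..n}" for i
  proof -
    have "\<bar>v $ i\<bar> \<le> of_int n * s"
      using component_le_norm_cart[of v i] assms(2) by linarith
    then have "- of_int n \<le> v $ i / s" "v $ i / s \<le> of_int n"
      using assms(1) by (simp_all add: field_simps abs_le_iff)
    then show ?thesis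
      by (simp add: le_floor_iff floor_le_iff)
  qed
  then show ?thesis
    by (simp add: grid_cell_def)
qed

lemma abs_diff_less_one_if_floor_eq:
  fixes x y :: "'a::floor_ceiling"
  assumes "\<lfloor>x\<rfloor> = \<lfloor>y\<rfloor>"
  shows "\<bar>x - y\<bar> < 1"
  using assms floor_correct[of x] floor_correct[of y] by (simp add: abs_less_iff) linarith

lemma norm_diff_less_if_grid_cell_eq:
  assumes "0 < s" "grid_cell s v = grid_cell s w"
  shows "norm (v - w) < 2 * s"
proof -
  have component: "\<bar>(v - w) $ i\<bar> < s" if "\<lfloor>v $ i / s\<rfloor> = \<lfloor>w $ i / s\<rfloor>" for i
  proof -
    have "\<bar>v $ i / s - w $ i / s\<bar> < 1"
      by (rule abs_diff_less_one_if_floor_eq[OF that])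
    then show ?thesis
      using assms(1) by (simp add: diff_divide_distrib[symmetric] abs_divide)
  qed
  from assms(2) have "\<lfloor>v $ 1 / s\<rfloor> = \<lfloor>w $ 1 / s\<rfloor>" "\<lfloor>v $ 2 / s\<rfloor> = \<lfloor>w $ 2 / s\<rfloor>"
    unfolding grid_cell_def by simp_all
  then have "\<bar>(v - w) $ 1\<bar> + \<bar>(v - w) $ 2\<bar> < 2 * s"
    using component[of 1] component[of 2] by linarith
  moreover have "norm (v - w) \<le> \<bar>(v - w) $ 1\<bar> + \<bar>(v - w) $ 2\<bar>"
    using norm_le_l1_cart[of "v - w"] by (simp add: sum_2)
  ultimately show ?thesis
    by linarith
qed

lemma norm_diff_power2_polar:
  fixes v w :: "'a::real_inner"
  shows "norm (v - w)^2 = (norm v - norm w)^2 + norm v * norm w * norm (sgn v - sgn w)^2"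
proof (cases "v = 0 \<or> w = 0")
  case True
  then show ?thesis by auto
next
  case False
  have "norm (v - w)^2 = norm v ^ 2 + norm w ^ 2 - 2 * (v \<bullet> w)"
    and "norm (sgn v - sgn w)^2 = norm (sgn v) ^ 2 + norm (sgn w) ^ 2 - 2 * (sgn v \<bullet> sgn w)"
    by (simp_all add: power2_norm_eq_inner inner_diff_left inner_diff_right inner_commute)
  moreover have "norm (sgn v) = 1" "norm (sgn w) = 1"
    and "sgn v \<bullet> sgn w = (v \<bullet> w) / (norm v * norm w)"
    using False by (simp_all add: norm_sgn sgn_div_norm divide_inverse)
  ultimately show ?thesis
    using False by (simp add: power2_eq_square field_simps)
qed

(* The left-hand side is convex in b, so it suffices to check b = 4\<rho> and b = a;
   the case split selects the endpoint that dominates. *)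
lemma annulus_chord_bound_ordered:
  fixes a b R \<rho> :: real
  assumes "0 < \<rho>" "4 * \<rho> \<le> b" "b \<le> a" "a \<le> R + \<rho>"
  shows "(a - b)^2 + a * b / 4 \<le> R^2"
proof (cases "b + 4 * \<rho> \<le> 7 * a / 4")
  case True
  have "0 \<le> (b - 4 * \<rho>) * (7 * a / 4 - b - 4 * \<rho>) + (R + \<rho> - a) * (a + R - 6 * \<rho>)
      + 5 * \<rho> * (R - 2 * \<rho>)"
    using True assms by (intro add_nonneg_nonneg mult_nonneg_nonneg) auto
  also have "\<dots> = R^2 - ((a - b)^2 + a * b / 4)"
    by (simp add: power2_eq_square field_simps)
  finally show ?thesis
    by simp
next
  case False
  have "0 \<le> (a - b) * (b - 3 * a / 4) + (2 * R - a) * (2 * R + a) / 4"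
    using False assms by (intro add_nonneg_nonneg mult_nonneg_nonneg divide_nonneg_pos) auto
  also have "\<dots> = R^2 - ((a - b)^2 + a * b / 4)"
    by (simp add: power2_eq_square field_simps)
  finally show ?thesis
    by simp
qed

lemma annulus_chord_bound:
  fixes a b R \<rho> :: real
  assumes "0 < \<rho>" "4 * \<rho> \<le> a" "4 * \<rho> \<le> b" "a \<le> R + \<rho>" "b \<le> R + \<rho>"
  shows "(a - b)^2 + a * b / 4 \<le> R^2"
proof (cases "b \<le> a")
  case True
  then show ?thesis
    using annulus_chord_bound_ordered[of \<rho> b a R] assms by simp
next
  case False
  then show ?thesis
    using annulus_chord_bound_ordered[of \<rho> a b R] assms by (simp add: power2_commute mult.commute)
qed

lemma norm_diff_le_if_direction_cell_eq:
  fixes v w :: "real^2"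
  assumes "0 < \<rho>" "4 * \<rho> \<le> norm v" "4 * \<rho> \<le> norm w" "norm v \<le> R + \<rho>" "norm w \<le> R + \<rho>"
    and "grid_cell (1/4) (sgn v) = grid_cell (1/4) (sgn w)"
  shows "norm (v - w) \<le> R"
proof -
  have "norm (sgn v - sgn w) < 1/2"
    using norm_diff_less_if_grid_cell_eq[OF _ assms(6)] by simp
  then have "norm (sgn v - sgn w)^2 \<le> (1/2)^2"
    by (intro power_mono) auto
  then have "norm (v - w)^2 \<le> (norm v - norm w)^2 + norm v * norm w * (1/2)^2"
    unfolding norm_diff_power2_polar[of v w] by (intro add_left_mono mult_left_mono) auto
  also have "\<dots> \<le> R^2"
    using annulus_chord_bound[OF assms(1-5)] by (simp add: power_divide)
  finally have "norm (v - w)^2 \<le> R^2" .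
  moreover have "0 \<le> R"
    using assms(1,2,4) by linarith
  ultimately show ?thesis
    by (rule power2_le_imp_le)
qed

definition clique_cell :: "real^2 \<Rightarrow> real \<Rightarrow> real^2 \<Rightarrow> (int \<times> int) + (int \<times> int)" where
  "clique_cell x0 \<rho> p =
     (if norm (p - x0) \<le> 4 * \<rho> then Inl (grid_cell (\<rho> / 2) (p - x0))
      else Inr (grid_cell (1/4) (sgn (p - x0))))"

definition clique_cells :: "((int \<times> int) + (int \<times> int)) set" where
  "clique_cells = ({-8..8} \<times> {-8..8}) <+> ({-4..4} \<times> {-4..4})"

lemma finite_clique_cells: "finite clique_cells"
  by (simp add: clique_cells_def)

lemma card_clique_cells: "card clique_cells = 370"
  by (simp add: clique_cells_def card_Plus card_cartesian_product)

lemma clique_cell_in_clique_cells: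
  assumes "0 < \<rho>"
  shows "clique_cell x0 \<rho> p \<in> clique_cells"
proof (cases "norm (p - x0) \<le> 4 * \<rho>")
  case True
  then have "grid_cell (\<rho> / 2) (p - x0) \<in> {-8..8} \<times> {-8..8}"
    using assms by (intro grid_cell_in_square) auto
  with True show ?thesis
    by (simp add: clique_cell_def clique_cells_def InlI)
next
  case False
  have "grid_cell (1/4) (sgn (p - x0)) \<in> {-4..4} \<times> {-4..4}"
    by (intro grid_cell_in_square) (auto simp: norm_sgn)
  with False show ?thesis
    by (simp add: clique_cell_def clique_cells_def InrI)
qed

lemma dist_le_max_if_clique_cell_eq:
  assumes "0 < \<rho>" "\<rho> \<le> r p" "\<rho> \<le> r q" "dist p x0 \<le> r p + \<rho>" "dist q x0 \<le> r q + \<rho>"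
    and same_cell: "clique_cell x0 \<rho> p = clique_cell x0 \<rho> q"
  shows "dist p q \<le> max (r p) (r q)"
proof -
  have "dist p q = norm ((p - x0) - (q - x0))"
    by (simp add: dist_norm)
  also have "\<dots> \<le> max (r p) (r q)"
  proof (cases "norm (p - x0) \<le> 4 * \<rho>")
    case True
    with same_cell have "norm (q - x0) \<le> 4 * \<rho>"
      and "grid_cell (\<rho> / 2) (p - x0) = grid_cell (\<rho> / 2) (q - x0)"
      by (auto simp: clique_cell_def split: if_splits)
    moreover have "0 < \<rho> / 2"
      using assms(1) by simp
    ultimately have "norm ((p - x0) - (q - x0)) < 2 * (\<rho> / 2)"
      using norm_diff_less_if_grid_cell_eq by blast
    with assms(2) show ?thesis
      by linarith
  next
    case False
    with same_cell have "\<not> norm (q - x0) \<le> 4 * \<rho>"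
      and same_direction: "grid_cell (1/4) (sgn (p - x0)) = grid_cell (1/4) (sgn (q - x0))"
      by (auto simp: clique_cell_def split: if_splits)
    with False have far: "4 * \<rho> \<le> norm (p - x0)" "4 * \<rho> \<le> norm (q - x0)"
      by linarith+
    have within_reach: "norm (p - x0) \<le> max (r p) (r q) + \<rho>" "norm (q - x0) \<le> max (r p) (r q) + \<rho>"
      using assms(4,5) unfolding dist_norm by linarith+
    show ?thesis
      by (rule norm_diff_le_if_direction_cell_eq[OF assms(1) far within_reach same_direction])
  qed
  finally show ?thesis .
qed

lemma dist_le_radius_sum_if_tr_disks_meet:
  assumes "tr_disk r p \<inter> tr_disk r q \<noteq> {}"
  shows "dist p q \<le> r p + r q"
proof -
  obtain z where "dist p z \<le> r p" "dist q z \<le> r q"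
    using assms by (auto simp: tr_disk_def)
  then show ?thesis
    using dist_triangle2[of p q z] by linarith
qed

lemma disk_clique_covered_by_transitive_paths:
  assumes "finite P" "\<forall>p\<in>P. 0 < r p" "disk_clique P r Q"
  shows "\<exists>paths. finite paths \<and> card paths \<le> 370 \<and>
           (\<forall>qs\<in>paths. transitive_path P r qs) \<and> (\<Union>qs\<in>paths. set qs) = Q"
proof (cases "Q = {}")
  case True
  then show ?thesis
    by (intro exI[of _ "{}"]) auto
next
  case False
  have "Q \<subseteq> P" and meet: "\<And>p q. p \<in> Q \<Longrightarrow> q \<in> Q \<Longrightarrow> tr_disk r p \<inter> tr_disk r q \<noteq> {}"
    using assms(3) by (auto simp: disk_clique_def)
  with assms(1) have "finite Q"
    using finite_subset by blast
  then obtain x0 where "x0 \<in> Q" and x0_min: "\<And>p. p \<in> Q \<Longrightarrow> r x0 \<le> r p"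
    using ex_is_arg_min_if_finite[OF _ False, of r] by (auto simp: is_arg_min_def not_less)
  have "0 < r x0"
    using assms(2) \<open>Q \<subseteq> P\<close> \<open>x0 \<in> Q\<close> by blast
  have cells: "clique_cell x0 (r x0) ` Q \<subseteq> clique_cells"
    using clique_cell_in_clique_cells[OF \<open>0 < r x0\<close>] by blast
  have close: "dist p q \<le> max (r p) (r q)"
    if "p \<in> Q" "q \<in> Q" "clique_cell x0 (r x0) p = clique_cell x0 (r x0) q" for p q
  proof (rule dist_le_max_if_clique_cell_eq[OF \<open>0 < r x0\<close> x0_min x0_min])
    show "dist p x0 \<le> r p + r x0" "dist q x0 \<le> r q + r x0"
      using dist_le_radius_sum_if_tr_disks_meet[OF meet] that \<open>x0 \<in> Q\<close> by simp_all
  qed (use that in simp_all)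
  show ?thesis
    using transitive_path_cover_by_labels[OF \<open>finite Q\<close> \<open>Q \<subseteq> P\<close> finite_clique_cells cells close]
    unfolding card_clique_cells .
qed

theorem lemma3:
  shows "\<exists>c::nat. \<forall>(P :: (real^2) set) (r :: real^2 \<Rightarrow> real) (Q :: (real^2) set).
     finite P \<and> (\<forall>p\<in>P. r p > 0) \<and> disk_clique P r Q \<longrightarrow>
     (\<exists>paths :: (real^2) list set. finite paths \<and> card paths \<le> c \<and>
        (\<forall>qs\<in>paths. transitive_path P r qs) \<and> (\<Union>qs\<in>paths. set qs) = Q)"
  by (intro exI[of _ 370] allI impI) (simp add: disk_clique_covered_by_transitive_paths)

end
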